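(* Consider $n$ agents indexed by $\mathcal{V}=\{1,\dots,n\}$ with Lagrangian dynamics $$M_i(q_i)\ddot q_i+C_i(q_i,\dot q_i)\dot q_i=\tau_i,\qquad i\in\mathcal{V},$$ where $q_i\in\mathbb{R}^m$, and for each $i$: $M_i(q_i)$ is symmetric positive definite and bounded for all $q_i$; $\dot M_i(q_i)-2C_i(q_i,\dot q_i)$ is skew symmetric; and there is $k_C>0$ with $\|C_i(q_i,\dot q_i)\|\le k_C\|\dot q_i\|$, $C_i$ bounded in $q_i$. Let $\mathcal{X}_1,\dots,\mathcal{X}_n\subseteq\mathbb{R}^m$ be closed convex sets such that $\mathcal{X}_0=\bigcap_{i=1}^n\mathcal{X}_i$ is nonempty and bounded. Let $\mathcal{G}=(\mathcal{V},\mathcal{E})$ be a fixed undirected graph with neighbor sets $\mathcal{N}_i=\{j:\{j,i\}\in\mathcal{E}\}$ and weights $a_{ij}=a_{ji}>0$ for $\{j,i\}\in\mathcal{E}$. Apply the control $$\tau_i=-k\dot q_i-(q_i-P_{\mathcal{X}_i}(q_i))-\sum_{j\in\mathcal{N}_i}a_{ij}(q_i-q_j),\qquad i\in\mathcal{V},$$ with $k>0$. If $\mathcal{G}$ is connected, then the closed-loop system achieves cooperative set aggregation: for every solution, $\lim_{t\to\infty}\|q_i(t)\|_{\mathcal{X}_0}=0$ for all $i$, $\lim_{t\to\infty}(q_i(t)-q_j(t))=0$ for all $i,j$, and $\lim_{t\to\infty}\dot q_i(t)=0$ for all $i$.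
   Context: $\|\cdot\|$ is the Euclidean norm. For a nonempty set $\mathcal{S}\subseteq\mathbb{R}^m$, $\|x\|_{\mathcal{S}}=\inf_{y\in\mathcal{S}}\|x-y\|$. For a closed convex set $\mathcal{S}$, $P_{\mathcal{S}}(x)\in\mathcal{S}$ denotes the Euclidean projection of $x$ onto $\mathcal{S}$, i.e. the point with $\|x-P_{\mathcal{S}}(x)\|=\|x\|_{\mathcal{S}}$. A graph is connected if every pair of nodes is joined by a path. *)

theory Defs
  imports "HOL-Analysis.Analysis"
begin

definition graph_connected :: "nat set \<Rightarrow> nat set set \<Rightarrow> bool" where
  "graph_connected V E \<longleftrightarrow> (\<forall>i\<in>V. \<forall>j\<in>V. (\<lambda>x y. {x, y} \<in> E)\<^sup>*\<^sup>* i j)"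

definition nbrs :: "nat set set \<Rightarrow> nat \<Rightarrow> nat set" where
  "nbrs E i = {j. {j, i} \<in> E}"

definition mnorm :: "real^'m^'k \<Rightarrow> real" where
  "mnorm A = onorm (\<lambda>x. A *v x)"

end

theory Submission
  imports Defs
begin

text \<open>
  Write \<open>P\<^sub>i\<close> for the projection onto \<open>X\<^sub>i\<close>. The energy consisting of the kinetic energies
  \<open>dq\<^sub>i \<bullet> M\<^sub>i dq\<^sub>i / 2\<close>, the potentials \<open>|q\<^sub>i - P\<^sub>i q\<^sub>i|\<^sup>2 / 2\<close> and the edge potentials
  \<open>a\<^sub>i\<^sub>j |q\<^sub>i - q\<^sub>j|\<^sup>2 / 2\<close> decreases at rate \<open>k \<Sum> |dq\<^sub>i|\<^sup>2\<close>, because the skew-symmetry of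
  \<open>dM\<^sub>i/dt - 2 C\<^sub>i\<close> means that the Coriolis forces do no work. Hence edge differences and
  distances to the sets \<open>X\<^sub>i\<close> stay bounded; as the intersection of the \<open>X\<^sub>i\<close> is bounded, so are
  the positions, and uniform positive definiteness of \<open>M\<^sub>i\<close> on compact sets then bounds
  velocities and accelerations. A Barbalat-type argument gives \<open>dq\<^sub>i \<longrightarrow> 0\<close>, and a second one,
  applied to the velocity, shows that the coupling force
  \<open>g\<^sub>i = (q\<^sub>i - P\<^sub>i q\<^sub>i) + \<Sum>\<^sub>j a\<^sub>i\<^sub>j (q\<^sub>i - q\<^sub>j)\<close> vanishes. Pairing the forces with \<open>q\<^sub>i - x\<^sub>0\<close>
  for a point \<open>x\<^sub>0\<close> of the intersection bounds the squared distances to the sets and the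
  weighted disagreements by \<open>\<Sum> |g\<^sub>i| |q\<^sub>i - x\<^sub>0|\<close>, so both vanish; connectivity then yields
  consensus, and compactness turns vanishing distance to every \<open>X\<^sub>i\<close> into vanishing distance
  to their intersection.
\<close>

section \<open>Matrices, projections and distance functions\<close>

lemma bounded_bilinear_matrix_vector_mult:
  "bounded_bilinear (\<lambda>(A::real^'n^'m) (x::real^'n). A *v x)"
proof -
  have "bilinear (\<lambda>(A::real^'n^'m) (x::real^'n). A *v x)"
    unfolding bilinear_def
    by (auto simp: linear_iff matrix_vector_right_distrib matrix_vector_mult_add_rdistrib
        matrix_vector_mult_scaleR scaleR_matrix_vector_assoc)
  then show ?thesis
    using bilinear_conv_bounded_bilinear by blast
qed

lemma skew_symmetric_quadratic_form:
  fixes S :: "real^'n^'n"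
  assumes "transpose S = - S"
  shows "x \<bullet> (S *v x) = 0"
proof -
  have "x \<bullet> (S *v x) = (transpose S *v x) \<bullet> x"
    by (simp add: dot_lmul_matrix)
  also have "transpose S *v x = - (S *v x)"
    using assms by (simp add: vec_eq_iff matrix_vector_mult_def sum_negf)
  finally show ?thesis by (simp add: inner_commute)
qed

lemma symmetric_matrix_inner_commute:
  fixes A :: "real^'n^'n"
  assumes "transpose A = A"
  shows "x \<bullet> (A *v y) = y \<bullet> (A *v x)"
proof -
  have "x \<bullet> (A *v y) = (transpose A *v x) \<bullet> y"
    by (simp add: dot_lmul_matrix)
  then show ?thesis
    using assms by (simp add: inner_commute)
qed

lemma has_real_derivative_norm_power2:
  fixes x :: "real \<Rightarrow> 'a::real_inner"
  assumes "(x has_vector_derivative x') (at t)"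
  shows "((\<lambda>s. (norm (x s))\<^sup>2) has_real_derivative 2 * (x t \<bullet> x')) (at t)"
proof -
  have "((\<lambda>s. x s \<bullet> x s) has_vector_derivative x t \<bullet> x' + x' \<bullet> x t) (at t)"
    using bounded_bilinear.has_vector_derivative[OF bounded_bilinear_inner assms assms] by simp
  then show ?thesis
    by (simp add: has_real_derivative_iff_has_vector_derivative power2_norm_eq_inner inner_commute)
qed

lemma has_vector_derivative_compose_at:
  assumes "(f has_vector_derivative f') (at t)" and "(g has_derivative g') (at (f t))"
  shows "((\<lambda>s. g (f s)) has_vector_derivative g' f') (at t)"
  using vector_derivative_diff_chain_within[of f f' t UNIV g g'] assms
    has_derivative_at_withinI[OF assms(2)] by (simp add: o_def)

lemma sqdist_closest_point_expansion:
  fixes S :: "'a::euclidean_space set"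
  assumes S: "closed S" "convex S" "S \<noteq> {}"
  shows "\<bar>(norm (y - closest_point S y))\<^sup>2 - (norm (x - closest_point S x))\<^sup>2
          - 2 * ((x - closest_point S x) \<bullet> (y - x))\<bar> \<le> 5 * (norm (y - x))\<^sup>2"
proof -
  define p p' h where "p = closest_point S x" and "p' = closest_point S y" and "h = y - x"
  define u u' where "u = x - p" and "u' = y - p'"
  have pS: "p \<in> S" "p' \<in> S"
    unfolding p_def p'_def using S closest_point_in_set by auto
  have "dist y p' \<le> dist y p"
    unfolding p'_def using closest_point_le S pS by auto
  then have "norm u' \<le> norm (u + h)"
    unfolding u'_def u_def h_def dist_norm by (simp add: algebra_simps)
  then have upper: "u' \<bullet> u' \<le> (u + h) \<bullet> (u + h)"
    by (simp add: dot_square_norm power_mono)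
  have "dist x p \<le> dist x p'"
    unfolding p_def using closest_point_le S pS by auto
  then have "norm u \<le> norm (u' - h)"
    unfolding u'_def u_def h_def dist_norm by (simp add: algebra_simps)
  then have lower: "u \<bullet> u \<le> (u' - h) \<bullet> (u' - h)"
    by (simp add: dot_square_norm power_mono)
  have "norm (p' - p) \<le> norm h"
    unfolding p_def p'_def h_def
    using closest_point_lipschitz[OF S(2,1,3), of y x] by (simp add: dist_norm)
  moreover have "u' - u = h - (p' - p)"
    unfolding u'_def u_def h_def by simp
  ultimately have "norm (u' - u) \<le> 2 * norm h"
    using norm_triangle_ineq4[of h "p' - p"] by simp
  then have "norm (u' - u) * norm h \<le> 2 * (norm h)\<^sup>2"
    using mult_right_mono[of "norm (u' - u)" "2 * norm h" "norm h"] by (simp add: power2_eq_square)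
  then have "(u' - u) \<bullet> h \<ge> - (2 * (norm h)\<^sup>2)"
    using Cauchy_Schwarz_ineq2[of "u' - u" h] by linarith
  moreover have "u' \<bullet> u' - u \<bullet> u - 2 * (u \<bullet> h) \<le> h \<bullet> h"
    using upper by (simp add: inner_add inner_commute)
  moreover have "u' \<bullet> u' - u \<bullet> u - 2 * (u \<bullet> h) \<ge> 2 * ((u' - u) \<bullet> h) - h \<bullet> h"
    using lower by (simp add: inner_diff inner_commute)
  ultimately have "\<bar>u' \<bullet> u' - u \<bullet> u - 2 * (u \<bullet> h)\<bar> \<le> 5 * (norm h)\<^sup>2"
    by (simp add: dot_square_norm)
  then show ?thesis
    unfolding u_def u'_def p_def p'_def h_def by (simp add: dot_square_norm)
qed

lemma has_derivative_sqdist_closest_point: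
  fixes S :: "'a::euclidean_space set"
  assumes S: "closed S" "convex S" "S \<noteq> {}"
  shows "((\<lambda>y. (norm (y - closest_point S y))\<^sup>2) has_derivative
           (\<lambda>h. 2 * ((x - closest_point S x) \<bullet> h))) (at x)"
  unfolding has_derivative_at_alt
proof (intro conjI allI impI)
  show "bounded_linear (\<lambda>h. 2 * ((x - closest_point S x) \<bullet> h))"
    by (intro bounded_linear_intros)
  fix e :: real
  assume "e > 0"
  show "\<exists>d>0. \<forall>y. norm (y - x) < d \<longrightarrow>
    norm ((norm (y - closest_point S y))\<^sup>2 - (norm (x - closest_point S x))\<^sup>2 -
     2 * ((x - closest_point S x) \<bullet> (y - x))) \<le> e * norm (y - x)"
  proof (intro exI[of _ "e / 5"] conjI allI impI)
    fix y
    assume "norm (y - x) < e / 5"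
    then have "5 * norm (y - x) * norm (y - x) \<le> e * norm (y - x)"
      by (intro mult_right_mono) auto
    then show "norm ((norm (y - closest_point S y))\<^sup>2 - (norm (x - closest_point S x))\<^sup>2 -
        2 * ((x - closest_point S x) \<bullet> (y - x))) \<le> e * norm (y - x)"
      using sqdist_closest_point_expansion[OF S, of y x]
      by (simp add: power2_eq_square mult.assoc)
  qed (use \<open>e > 0\<close> in simp)
qed

lemma compact_pos_continuous_lower_bound:
  fixes h :: "'a::metric_space \<Rightarrow> real"
  assumes "compact K" "continuous_on K h" "\<And>x. x \<in> K \<Longrightarrow> h x > 0"
  obtains m where "m > 0" "\<And>x. x \<in> K \<Longrightarrow> m \<le> h x"
proof (cases "K = {}")
  case True
  then show ?thesis using that[of 1] by auto
next
  case False
  then obtain x0 where "x0 \<in> K" "\<forall>x\<in>K. h x0 \<le> h x"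
    using continuous_attains_inf[OF assms(1) _ assms(2)] by blast
  then show ?thesis using that assms(3) by blast
qed

lemma uniformly_positive_definite_on_compact:
  fixes M :: "'a::metric_space \<Rightarrow> real^'n^'n"
  assumes "compact K" "continuous_on K M"
    and pd: "\<And>x v. x \<in> K \<Longrightarrow> v \<noteq> 0 \<Longrightarrow> v \<bullet> (M x *v v) > 0"
  obtains \<mu> where "\<mu> > 0" "\<And>x v. x \<in> K \<Longrightarrow> \<mu> * (norm v)\<^sup>2 \<le> v \<bullet> (M x *v v)"
proof -
  let ?S = "sphere (0::real^'n) 1"
  have compact: "compact (K \<times> ?S)"
    using assms(1) by (intro compact_Times compact_sphere)
  have "continuous_on (K \<times> ?S) (\<lambda>p. M (fst p))"
    by (rule continuous_on_compose2[OF assms(2) continuous_on_fst[OF continuous_on_id]]) auto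
  then have "continuous_on (K \<times> ?S) (\<lambda>p. M (fst p) *v snd p)"
    using bounded_bilinear.continuous_on[OF bounded_bilinear_matrix_vector_mult _
        continuous_on_snd[OF continuous_on_id]] by simp
  then have "continuous_on (K \<times> ?S) (\<lambda>p. snd p \<bullet> (M (fst p) *v snd p))"
    by (intro continuous_on_inner continuous_on_snd continuous_on_id)
  moreover have "snd p \<bullet> (M (fst p) *v snd p) > 0" if "p \<in> K \<times> ?S" for p
  proof -
    have "snd p \<noteq> 0" using that by auto
    then show ?thesis using that pd by auto
  qed
  ultimately obtain \<mu> where \<mu>: "\<mu> > 0" "\<And>p. p \<in> K \<times> ?S \<Longrightarrow> \<mu> \<le> snd p \<bullet> (M (fst p) *v snd p)"
    using compact_pos_continuous_lower_bound[OF compact] by blast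
  have "\<mu> * (norm v)\<^sup>2 \<le> v \<bullet> (M x *v v)" if "x \<in> K" for x v
  proof (cases "v = 0")
    case False
    define u where "u = (1 / norm v) *\<^sub>R v"
    have "\<mu> \<le> u \<bullet> (M x *v u)"
      using \<mu>(2)[of "(x, u)"] that False unfolding u_def by simp
    moreover have "v \<bullet> (M x *v v) = (norm v)\<^sup>2 * (u \<bullet> (M x *v u))"
      using False unfolding u_def
      by (simp add: matrix_vector_mult_scaleR power2_eq_square)
    ultimately show ?thesis
      by (metis mult.commute mult_right_mono zero_le_power2)
  qed simp
  with \<mu>(1) show ?thesis using that by blast
qed

lemma infdist_eq_dist_closest_point:
  assumes "closed S" "S \<noteq> {}"
  shows "infdist x S = dist x (closest_point S x)"
  using setdist_closest_point[OF assms] by (simp add: infdist_eq_setdist)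

lemma infdist_shrink_to_convex_point:
  fixes S :: "'a::euclidean_space set"
  assumes "closed S" "convex S" "x0 \<in> S" "0 \<le> \<theta>" "\<theta> \<le> 1"
  shows "infdist (x0 + \<theta> *\<^sub>R (x - x0)) S \<le> \<theta> * infdist x S"
proof -
  define p where "p = closest_point S x"
  have "S \<noteq> {}" using assms(3) by blast
  then have "p \<in> S" and dist_p: "dist x p = infdist x S"
    unfolding p_def
    using closest_point_in_set[OF assms(1)] infdist_eq_dist_closest_point[OF assms(1)] by simp_all
  then have "(1 - \<theta>) *\<^sub>R x0 + \<theta> *\<^sub>R p \<in> S"
    using convexD[OF assms(2,3)] assms(4,5) by simp
  moreover have "(x0 + \<theta> *\<^sub>R (x - x0)) - ((1 - \<theta>) *\<^sub>R x0 + \<theta> *\<^sub>R p) = \<theta> *\<^sub>R (x - p)"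
    by (simp add: algebra_simps)
  then have "dist (x0 + \<theta> *\<^sub>R (x - x0)) ((1 - \<theta>) *\<^sub>R x0 + \<theta> *\<^sub>R p) = \<theta> * dist x p"
    using assms(4) by (simp add: dist_norm)
  ultimately show ?thesis
    using infdist_le dist_p by metis
qed

lemma sum_infdist_pos_outside_Inter:
  assumes "finite I" and "\<And>i. i \<in> I \<Longrightarrow> closed (X i)" and "\<And>i. i \<in> I \<Longrightarrow> X i \<noteq> {}"
    and "y \<notin> (\<Inter>i\<in>I. X i)"
  shows "(\<Sum>i\<in>I. infdist y (X i)) > 0"
proof -
  obtain i where "i \<in> I" "y \<notin> X i"
    using assms(4) by blast
  then have "infdist y (X i) > 0"
    using in_closed_iff_infdist_zero[OF assms(2,3), of i y] infdist_nonneg[of y "X i"] by fastforce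
  then show ?thesis
    using \<open>i \<in> I\<close> assms(1) by (intro sum_pos2[where i=i]) (auto simp: infdist_nonneg)
qed

lemma bounded_infdist_sublevel_Inter:
  fixes X :: "'i \<Rightarrow> 'a::euclidean_space set"
  assumes fin: "finite I" and closed: "\<And>i. i \<in> I \<Longrightarrow> closed (X i)"
    and convex: "\<And>i. i \<in> I \<Longrightarrow> convex (X i)"
    and ne: "(\<Inter>i\<in>I. X i) \<noteq> {}" and bdd: "bounded (\<Inter>i\<in>I. X i)"
  shows "bounded {x. \<forall>i\<in>I. infdist x (X i) \<le> D}"
proof -
  obtain x0 where x0: "x0 \<in> (\<Inter>i\<in>I. X i)" using ne by blast
  obtain r where r: "r > 0" "(\<Inter>i\<in>I. X i) \<subseteq> ball x0 r"
    using bounded_subset_ballD[OF bdd] by blast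
  define h where "h y = (\<Sum>i\<in>I. infdist y (X i))" for y
  have "h y > 0" if "y \<in> sphere x0 r" for y
    unfolding h_def using that r(2) x0
    by (intro sum_infdist_pos_outside_Inter[OF fin closed]) auto
  moreover have "continuous_on (sphere x0 r) h"
    unfolding h_def by (intro continuous_intros)
  ultimately obtain m where m: "m > 0" "\<And>y. y \<in> sphere x0 r \<Longrightarrow> m \<le> h y"
    using compact_pos_continuous_lower_bound[OF compact_sphere] by metis
  have "norm (x - x0) \<le> max r (real (card I) * r * D / m)"
    if D: "\<forall>i\<in>I. infdist x (X i) \<le> D" for x
  proof (rule ccontr)
    assume far: "\<not> ?thesis"
    define L where "L = norm (x - x0)"
    have L: "L > r" "real (card I) * r * D / m < L" using far unfolding L_def by auto
    define \<theta> where "\<theta> = r / L"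
    have \<theta>: "0 < \<theta>" "\<theta> < 1" unfolding \<theta>_def using L r by auto
    \<comment> \<open>Pulling \<open>x\<close> towards \<open>x0\<close> onto the sphere scales every distance by \<open>\<theta>\<close>.\<close>
    have "infdist (x0 + \<theta> *\<^sub>R (x - x0)) (X i) \<le> \<theta> * D" if i: "i \<in> I" for i
    proof -
      have "infdist (x0 + \<theta> *\<^sub>R (x - x0)) (X i) \<le> \<theta> * infdist x (X i)"
        using infdist_shrink_to_convex_point[OF closed[OF i] convex[OF i]] x0 i \<theta> by auto
      also have "\<dots> \<le> \<theta> * D"
        using D i \<theta> by (simp add: mult_left_mono)
      finally show ?thesis .
    qed
    then have "h (x0 + \<theta> *\<^sub>R (x - x0)) \<le> real (card I) * (\<theta> * D)"
      unfolding h_def using sum_bounded_above[of I] by metis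
    moreover have "norm (\<theta> *\<^sub>R (x - x0)) = r"
      using \<theta> L r unfolding \<theta>_def L_def by auto
    then have "x0 + \<theta> *\<^sub>R (x - x0) \<in> sphere x0 r"
      by (simp add: dist_norm)
    ultimately have "m \<le> real (card I) * r * D / L"
      using m(2) unfolding \<theta>_def by fastforce
    then show False
      using L m(1) r by (simp add: field_simps)
  qed
  then have "norm x \<le> norm x0 + max r (real (card I) * r * D / m)"
    if "\<forall>i\<in>I. infdist x (X i) \<le> D" for x
    using that norm_triangle_sub[of x x0] by fastforce
  then show ?thesis
    unfolding bounded_iff by blast
qed

lemma tendsto_infdist_Inter:
  fixes f :: "'b \<Rightarrow> 'a::euclidean_space"
  assumes fin: "finite I" and closed: "\<And>i. i \<in> I \<Longrightarrow> closed (X i)"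
    and bdd: "eventually (\<lambda>t. norm (f t) \<le> R) F"
    and lim: "\<And>i. i \<in> I \<Longrightarrow> ((\<lambda>t. infdist (f t) (X i)) \<longlongrightarrow> 0) F"
  shows "((\<lambda>t. infdist (f t) (\<Inter>i\<in>I. X i)) \<longlongrightarrow> 0) F"
proof (cases "\<exists>i\<in>I. X i = {}")
  case True
  then have "(\<Inter>i\<in>I. X i) = {}" by auto
  then show ?thesis by (simp add: infdist_def)
next
  case False
  let ?X0 = "\<Inter>i\<in>I. X i"
  define H where "H x = (\<Sum>i\<in>I. infdist x (X i))" for x
  show ?thesis
  proof (rule tendstoI)
    fix \<epsilon> :: real
    assume "\<epsilon> > 0"
    define K where "K = cball 0 R \<inter> {x. \<epsilon> \<le> infdist x ?X0}"
    have "compact K"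
      unfolding K_def by (intro compact_Int_closed compact_cball closed_Collect_le
          continuous_on_const continuous_on_infdist continuous_on_id)
    moreover have "continuous_on K H"
      unfolding H_def by (intro continuous_intros)
    moreover have "H x > 0" if "x \<in> K" for x
    proof -
      have "x \<notin> ?X0"
        using that \<open>\<epsilon> > 0\<close> infdist_zero[of x ?X0] unfolding K_def by force
      then show ?thesis
        unfolding H_def using False by (intro sum_infdist_pos_outside_Inter[OF fin closed]) auto
    qed
    ultimately obtain m where m: "m > 0" "\<And>x. x \<in> K \<Longrightarrow> m \<le> H x"
      using compact_pos_continuous_lower_bound by metis
    have "((\<lambda>t. H (f t)) \<longlongrightarrow> 0) F"
      unfolding H_def using lim by (intro tendsto_null_sum) auto
    then have "eventually (\<lambda>t. H (f t) < m) F"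
      using order_tendstoD(2) m(1) by blast
    with bdd show "eventually (\<lambda>t. dist (infdist (f t) ?X0) 0 < \<epsilon>) F"
    proof eventually_elim
      case (elim t)
      then have "f t \<notin> K" using m(2) by force
      with elim show ?case unfolding K_def by (simp add: infdist_nonneg)
    qed
  qed
qed

section \<open>Sums over an undirected graph\<close>

lemma sum_nbrs_symmetrize:
  fixes x z :: "nat \<Rightarrow> 'a::real_inner"
  assumes fin: "finite V" and sub: "\<And>i. nbrs E i \<subseteq> V"
    and sym: "\<And>i j. {i, j} \<in> E \<Longrightarrow> a i j = a j i"
  shows "(\<Sum>i\<in>V. \<Sum>j\<in>nbrs E i. a i j * ((x i - x j) \<bullet> z i))
       = (\<Sum>i\<in>V. \<Sum>j\<in>nbrs E i. a i j * ((x i - x j) \<bullet> (z i - z j))) / 2"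
proof -
  have nbrs: "nbrs E i = {j\<in>V. {j, i} \<in> E}" for i
    using sub unfolding nbrs_def by blast
  have "(\<Sum>i\<in>V. \<Sum>j\<in>nbrs E i. a i j * ((x i - x j) \<bullet> z j))
      = (\<Sum>i\<in>V. \<Sum>j\<in>nbrs E i. a j i * ((x j - x i) \<bullet> z i))"
    unfolding nbrs using sum.swap_restrict[OF fin fin, of "\<lambda>i j. a i j * ((x i - x j) \<bullet> z j)"]
    by (simp add: insert_commute)
  also have "\<dots> = - (\<Sum>i\<in>V. \<Sum>j\<in>nbrs E i. a i j * ((x i - x j) \<bullet> z i))"
    unfolding sum_negf[symmetric] using sym
    by (intro sum.cong refl) (auto simp: nbrs_def inner_diff_left algebra_simps insert_commute)
  finally show ?thesis
    by (simp add: inner_diff_right right_diff_distrib sum_subtractf)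
qed

lemma rtranclp_edge_differences:
  fixes f :: "'v \<Rightarrow> 'b \<Rightarrow> 'c::ab_group_add"
  assumes "(\<lambda>x y. {x, y} \<in> E)\<^sup>*\<^sup>* i j"
    and edge: "\<And>x y. {x, y} \<in> E \<Longrightarrow> P (\<lambda>t. f x t - f y t)"
    and zero: "P (\<lambda>t. 0)"
    and add: "\<And>u v. P u \<Longrightarrow> P v \<Longrightarrow> P (\<lambda>t. u t + v t)"
  shows "P (\<lambda>t. f i t - f j t)"
  using assms(1)
proof (induction rule: rtranclp_induct)
  case base
  then show ?case using zero by simp
next
  case (step y z)
  then have "P (\<lambda>t. (f i t - f y t) + (f y t - f z t))"
    using add edge by blast
  then show ?case by simp
qed

section \<open>Barbalat-type convergence lemmas\<close>

lemma norm_increment_le_derivative_bound: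
  fixes f :: "real \<Rightarrow> 'a::real_normed_vector"
  assumes "a \<le> b"
    and "\<And>s. a \<le> s \<Longrightarrow> s \<le> b \<Longrightarrow> (f has_vector_derivative f' s) (at s)"
    and "\<And>s. a \<le> s \<Longrightarrow> s \<le> b \<Longrightarrow> norm (f' s) \<le> B"
  shows "norm (f b - f a) \<le> B * (b - a)"
proof -
  have "norm (f b - f a) \<le> B * norm (b - a)"
  proof (rule differentiable_bound[of "{a..b}" f "\<lambda>s h. h *\<^sub>R f' s"])
    fix s
    assume "s \<in> {a..b}"
    then show "(f has_derivative (\<lambda>h. h *\<^sub>R f' s)) (at s within {a..b})"
      using assms(2) unfolding has_vector_derivative_def by (auto intro: has_derivative_at_withinI)
    have "onorm (\<lambda>h. h *\<^sub>R f' s) = norm (f' s)"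
      using onorm_scaleR_left[OF bounded_linear_ident] by (simp add: onorm_id)
    with \<open>s \<in> {a..b}\<close> show "onorm (\<lambda>h. h *\<^sub>R f' s) \<le> B"
      using assms(3) by simp
  qed (use assms(1) in auto)
  then show ?thesis using assms(1) by simp
qed

lemma norm_ge_of_derivative_bound:
  fixes f :: "real \<Rightarrow> 'a::real_normed_vector"
  assumes "a \<le> b"
    and "\<And>s. a \<le> s \<Longrightarrow> s \<le> b \<Longrightarrow> (f has_vector_derivative f' s) (at s)"
    and "\<And>s. a \<le> s \<Longrightarrow> s \<le> b \<Longrightarrow> norm (f' s) \<le> B"
  shows "norm (f a) - B * (b - a) \<le> norm (f b)"
  using norm_increment_le_derivative_bound[OF assms] norm_triangle_ineq2[of "f a" "f b"]
  by (simp add: norm_minus_commute)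

lemma eventually_uniform_increment_le:
  fixes f :: "real \<Rightarrow> 'a::real_normed_vector"
  assumes "\<And>t. t \<ge> T \<Longrightarrow> (f has_vector_derivative f' t) (at t)"
    and "(f' \<longlongrightarrow> 0) at_top" and "\<epsilon> > 0"
  shows "eventually (\<lambda>t. \<forall>s\<in>{t..t+1}. norm (f s - f t) \<le> \<epsilon>) at_top"
proof -
  have "eventually (\<lambda>t. norm (f' t) < \<epsilon>) at_top"
    using order_tendstoD(2)[OF tendsto_norm_zero[OF assms(2)] assms(3)] .
  then obtain T' where T': "\<And>t. t \<ge> T' \<Longrightarrow> norm (f' t) < \<epsilon>"
    by (auto simp: eventually_at_top_linorder)
  have "norm (f s - f t) \<le> \<epsilon>" if "t \<ge> max T T'" "s \<in> {t..t+1}" for t s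
  proof -
    have "norm (f s - f t) \<le> \<epsilon> * (s - t)"
      using that T' assms(1) by (intro norm_increment_le_derivative_bound[where f'=f']) (auto intro: less_imp_le)
    also have "\<dots> \<le> \<epsilon>"
      using that assms(3) by (simp add: mult_left_le)
    finally show ?thesis .
  qed
  then show ?thesis
    unfolding eventually_at_top_linorder by blast
qed

lemma uniform_bound_finite:
  fixes f :: "'i \<Rightarrow> 'b::linorder \<Rightarrow> real"
  assumes "finite I" and "\<And>i. i \<in> I \<Longrightarrow> \<exists>R. \<forall>t\<ge>c. f i t \<le> R"
  shows "\<exists>R. \<forall>i\<in>I. \<forall>t\<ge>c. f i t \<le> R"
proof -
  obtain R where R: "\<And>i t. i \<in> I \<Longrightarrow> t \<ge> c \<Longrightarrow> f i t \<le> R i"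
    using assms(2) by metis
  have "f i t \<le> (\<Sum>j\<in>I. \<bar>R j\<bar>)" if "i \<in> I" "t \<ge> c" for i t
    using R[OF that] member_le_sum[of i I "\<lambda>j. \<bar>R j\<bar>"] that assms(1) by force
  then show ?thesis by blast
qed


lemma decrease_of_derivative_le:
  fixes W :: "real \<Rightarrow> real"
  assumes "a \<le> b"
    and "\<And>s. a \<le> s \<Longrightarrow> s \<le> b \<Longrightarrow> (W has_real_derivative W' s) (at s)"
    and "\<And>s. a \<le> s \<Longrightarrow> s \<le> b \<Longrightarrow> W' s \<le> - \<gamma>"
  shows "W b + \<gamma> * (b - a) \<le> W a"
proof -
  have "W b + \<gamma> * b \<le> W a + \<gamma> * a"
  proof (rule DERIV_nonpos_imp_nonincreasing[where f="\<lambda>s. W s + \<gamma> * s", OF assms(1)])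
    fix s
    assume "a \<le> s" "s \<le> b"
    then show "\<exists>y. ((\<lambda>s. W s + \<gamma> * s) has_real_derivative y) (at s) \<and> y \<le> 0"
      using assms(2,3) by (intro exI[of _ "W' s + \<gamma>"]) (force intro!: derivative_eq_intros)
  qed
  then show ?thesis
    by (simp add: algebra_simps)
qed

lemma tendsto_zero_of_dissipation:
  fixes W :: "real \<Rightarrow> real" and f :: "real \<Rightarrow> 'a::real_normed_vector"
  assumes W: "\<And>t. t \<ge> T \<Longrightarrow> (W has_real_derivative W' t) (at t)"
    and dissipation: "\<And>t. t \<ge> T \<Longrightarrow> W' t \<le> - c * (norm (f t))\<^sup>2" and "c > 0"
    and bounded_below: "\<And>t. t \<ge> T \<Longrightarrow> L \<le> W t"
    and f: "\<And>t. t \<ge> T \<Longrightarrow> (f has_vector_derivative f' t) (at t)"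
    and f'_bound: "\<And>t. t \<ge> T \<Longrightarrow> norm (f' t) \<le> B"
  shows "(f \<longlongrightarrow> 0) at_top"
proof (rule tendstoI)
  fix \<epsilon> :: real
  assume "\<epsilon> > 0"
  define B' where "B' = max B 1"
  define \<delta> where "\<delta> = \<epsilon> / (2 * B')"
  define \<gamma> where "\<gamma> = c * (\<epsilon> / 2)\<^sup>2"
  have "B' \<ge> 1" "\<delta> > 0" "\<gamma> > 0"
    unfolding B'_def \<delta>_def \<gamma>_def using \<open>\<epsilon> > 0\<close> \<open>c > 0\<close> by auto
  have "bdd_below (W ` {T..})"
    using bounded_below by (intro bdd_belowI[of _ L]) auto
  then have Inf_le: "Inf (W ` {T..}) \<le> W t" if "t \<ge> T" for t
    using that by (auto intro: cInf_lower)
  obtain S where S: "S \<ge> T" "W S < Inf (W ` {T..}) + \<gamma> * \<delta>"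
    using cInf_less_iff[OF _ \<open>bdd_below (W ` {T..})\<close>, of "Inf (W ` {T..}) + \<gamma> * \<delta>"]
      \<open>\<gamma> > 0\<close> \<open>\<delta> > 0\<close> by auto
  have "norm (f t) < \<epsilon>" if "t \<ge> S" for t
  proof (rule ccontr)
    assume "\<not> norm (f t) < \<epsilon>"
    \<comment> \<open>The bounded derivative keeps \<open>f\<close> large on \<open>[t, t + \<delta>]\<close>, so \<open>W\<close> drops by \<open>\<gamma> \<delta>\<close> there.\<close>
    have large: "\<epsilon> / 2 \<le> norm (f s)" if "t \<le> s" "s \<le> t + \<delta>" for s
    proof -
      have "norm (f t) - B' * (s - t) \<le> norm (f s)"
      proof (rule norm_ge_of_derivative_bound[where f'=f', OF \<open>t \<le> s\<close>])
        fix r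
        assume "t \<le> r" "r \<le> s"
        then have "T \<le> r" using \<open>t \<ge> S\<close> S(1) by simp
        then show "(f has_vector_derivative f' r) (at r)" "norm (f' r) \<le> B'"
          using f f'_bound unfolding B'_def by (auto simp: le_max_iff_disj)
      qed
      moreover have "B' * (s - t) \<le> \<epsilon> / 2"
        using that \<open>B' \<ge> 1\<close> mult_left_mono[of "s - t" \<delta> B'] unfolding \<delta>_def by simp
      ultimately show ?thesis
        using \<open>\<not> norm (f t) < \<epsilon>\<close> by linarith
    qed
    have "W (t + \<delta>) + \<gamma> * ((t + \<delta>) - t) \<le> W t"
    proof (rule decrease_of_derivative_le[where W'=W'])
      fix s
      assume s: "t \<le> s" "s \<le> t + \<delta>"
      have "\<gamma> \<le> c * (norm (f s))\<^sup>2"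
        unfolding \<gamma>_def using large[OF s] \<open>\<epsilon> > 0\<close> \<open>c > 0\<close>
        by (intro mult_left_mono power_mono) auto
      then show "W' s \<le> - \<gamma>"
        using dissipation[of s] s \<open>t \<ge> S\<close> S(1) by simp
      show "(W has_real_derivative W' s) (at s)"
        using W[of s] s \<open>t \<ge> S\<close> S(1) by simp
    qed (use \<open>\<delta> > 0\<close> in simp)
    moreover have "W t + 0 * (t - S) \<le> W S"
    proof (rule decrease_of_derivative_le[where W'=W', OF \<open>t \<ge> S\<close>])
      fix s
      assume "S \<le> s" "s \<le> t"
      then show "(W has_real_derivative W' s) (at s)" "W' s \<le> - 0"
        using W[of s] dissipation[of s] S(1) \<open>c > 0\<close>
        by (auto intro: order_trans[of _ "- c * (norm (f s))\<^sup>2"])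
    qed
    moreover have "Inf (W ` {T..}) \<le> W (t + \<delta>)"
      using Inf_le \<open>t \<ge> S\<close> S(1) \<open>\<delta> > 0\<close> by simp
    ultimately show False
      using S(2) by (simp add: algebra_simps)
  qed
  then show "eventually (\<lambda>t. dist (f t) 0 < \<epsilon>) at_top"
    unfolding eventually_at_top_linorder by auto
qed

lemma tendsto_zero_of_approximate_derivative:
  fixes y :: "real \<Rightarrow> 'a::real_normed_vector" and L :: "real \<Rightarrow> 'a \<Rightarrow> 'b::real_normed_vector"
  assumes y: "(y \<longlongrightarrow> 0) at_top"
    and y': "\<And>t. t \<ge> T \<Longrightarrow> (y has_vector_derivative y' t) (at t)"
    and L: "\<And>t. bounded_linear (L t)" and L_bound: "\<And>t x. t \<ge> T \<Longrightarrow> norm (L t x) \<le> K * norm x"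
    and approx: "\<And>\<epsilon>. \<epsilon> > 0 \<Longrightarrow>
      eventually (\<lambda>t. \<forall>s\<in>{t..t+1}. norm (L t (y' s) - h t) \<le> \<epsilon>) at_top"
  shows "(h \<longlongrightarrow> 0) at_top"
proof (rule tendstoI)
  fix \<epsilon> :: real
  assume "\<epsilon> > 0"
  \<comment> \<open>Over a unit interval the increment of \<open>L t \<circ> y\<close> is within \<open>\<epsilon>\<close> of \<open>h t\<close>.\<close>
  have bound: "norm (h t) \<le> \<epsilon> / 2 + K * norm (y (t + 1) - y t)"
    if "t \<ge> T" and close: "\<forall>s\<in>{t..t+1}. norm (L t (y' s) - h t) \<le> \<epsilon> / 2" for t
  proof -
    have "norm ((L t (y (t + 1)) - (t + 1) *\<^sub>R h t) - (L t (y t) - t *\<^sub>R h t)) \<le> \<epsilon> / 2 * ((t + 1) - t)"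
    proof (rule norm_increment_le_derivative_bound[where f'="\<lambda>s. L t (y' s) - h t"])
      fix s
      assume "t \<le> s" "s \<le> t + 1"
      then show "((\<lambda>s. L t (y s) - s *\<^sub>R h t) has_vector_derivative L t (y' s) - h t) (at s)"
        using bounded_linear.has_vector_derivative[OF L y'[of s]] \<open>t \<ge> T\<close>
        by (auto intro!: derivative_eq_intros)
    qed (use close in auto)
    then have "norm (L t (y (t + 1) - y t) - h t) \<le> \<epsilon> / 2"
      by (simp add: linear_diff[OF bounded_linear.linear[OF L]] algebra_simps)
    moreover have "norm (h t) \<le> norm (L t (y (t + 1) - y t)) + norm (h t - L t (y (t + 1) - y t))"
      by (rule norm_triangle_sub)
    ultimately show ?thesis
      using L_bound[OF \<open>t \<ge> T\<close>, of "y (t + 1) - y t"] by (simp add: norm_minus_commute)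
  qed
  have "filterlim (\<lambda>t::real. t + 1) at_top at_top"
    using filterlim_tendsto_add_at_top[OF tendsto_const[of 1] filterlim_ident] by (simp add: add.commute)
  then have "((\<lambda>t. y (t + 1) - y t) \<longlongrightarrow> 0 - 0) at_top"
    by (intro tendsto_diff y filterlim_compose[OF y])
  then have "((\<lambda>t. K * norm (y (t + 1) - y t)) \<longlongrightarrow> 0) at_top"
    using tendsto_mult_right_zero tendsto_norm_zero by fastforce
  then have "eventually (\<lambda>t. K * norm (y (t + 1) - y t) < \<epsilon> / 2) at_top"
    by (rule order_tendstoD(2)) (use \<open>\<epsilon> > 0\<close> in simp)
  moreover have "eventually (\<lambda>t. t \<ge> T) at_top"
    by (rule eventually_ge_at_top)
  moreover have "eventually (\<lambda>t. \<forall>s\<in>{t..t+1}. norm (L t (y' s) - h t) \<le> \<epsilon> / 2) at_top"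
    using approx[of "\<epsilon> / 2"] \<open>\<epsilon> > 0\<close> by simp
  ultimately show "eventually (\<lambda>t. dist (h t) 0 < \<epsilon>) at_top"
  proof eventually_elim
    case (elim t)
    then show ?case using bound[of t] by simp
  qed
qed

lemma tendsto_zero_of_norm_power2_le:
  fixes f :: "'b \<Rightarrow> 'a::real_normed_vector"
  assumes "(g \<longlongrightarrow> 0) F" and "\<And>t. (norm (f t))\<^sup>2 \<le> g t"
  shows "(f \<longlongrightarrow> 0) F"
proof -
  have "((\<lambda>t. norm (f t)) \<longlongrightarrow> 0) F"
  proof (rule tendsto_sandwich[OF always_eventually always_eventually tendsto_const])
    show "((\<lambda>t. sqrt (g t)) \<longlongrightarrow> 0) F"
      using tendsto_real_sqrt[OF assms(1)] by simp
    show "\<forall>t. norm (f t) \<le> sqrt (g t)"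
      using assms(2) by (simp add: real_le_rsqrt)
  qed simp
  then show ?thesis
    by (simp add: tendsto_norm_zero_iff)
qed


section \<open>The closed-loop network\<close>

locale lagrangian_network =
  fixes V :: "nat set"
    and M :: "nat \<Rightarrow> real^'m \<Rightarrow> real^'m^'m"
    and M' :: "nat \<Rightarrow> real^'m \<Rightarrow> real^'m \<Rightarrow> real^'m^'m"
    and C :: "nat \<Rightarrow> real^'m \<Rightarrow> real^'m \<Rightarrow> real^'m^'m"
    and X :: "nat \<Rightarrow> (real^'m) set"
    and E :: "nat set set"
    and a :: "nat \<Rightarrow> nat \<Rightarrow> real"
    and k k_C :: real
    and q dq ddq :: "nat \<Rightarrow> real \<Rightarrow> real^'m"
  assumes finite_V: "finite V"
    and M_sym: "\<And>i x. i \<in> V \<Longrightarrow> transpose (M i x) = M i x"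
    and M_pd: "\<And>i x v. i \<in> V \<Longrightarrow> v \<noteq> 0 \<Longrightarrow> v \<bullet> (M i x *v v) > 0"
    and M_deriv: "\<And>i x. i \<in> V \<Longrightarrow> (M i has_derivative M' i x) (at x)"
    and skew: "\<And>i x v. i \<in> V \<Longrightarrow>
        transpose (M' i x v - 2 *\<^sub>R C i x v) = - (M' i x v - 2 *\<^sub>R C i x v)"
    and C_bound: "\<And>i x v. i \<in> V \<Longrightarrow> mnorm (C i x v) \<le> k_C * norm v"
    and X_closed: "\<And>i. i \<in> V \<Longrightarrow> closed (X i)"
    and X_convex: "\<And>i. i \<in> V \<Longrightarrow> convex (X i)"
    and Inter_X_ne: "(\<Inter>i\<in>V. X i) \<noteq> {}"
    and Inter_X_bounded: "bounded (\<Inter>i\<in>V. X i)"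
    and E_edges: "\<And>e. e \<in> E \<Longrightarrow> \<exists>i j. e = {i, j} \<and> i \<in> V \<and> j \<in> V"
    and a_sym: "\<And>i j. {i, j} \<in> E \<Longrightarrow> a i j = a j i"
    and a_pos: "\<And>i j. {i, j} \<in> E \<Longrightarrow> a i j > 0"
    and k_pos: "k > 0"
    and connected: "graph_connected V E"
    and q_deriv: "\<And>i t. i \<in> V \<Longrightarrow> t \<ge> 0 \<Longrightarrow>
        (q i has_vector_derivative dq i t) (at t within {0..})"
    and dq_deriv: "\<And>i t. i \<in> V \<Longrightarrow> t \<ge> 0 \<Longrightarrow>
        (dq i has_vector_derivative ddq i t) (at t within {0..})"
    and dynamics: "\<And>i t. i \<in> V \<Longrightarrow> t \<ge> 0 \<Longrightarrow>
        M i (q i t) *v ddq i t + C i (q i t) (dq i t) *v dq i t =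
          - k *\<^sub>R dq i t - (q i t - closest_point (X i) (q i t))
          - (\<Sum>j\<in>nbrs E i. a i j *\<^sub>R (q i t - q j t))"
begin

lemma nbrs_subset: "nbrs E i \<subseteq> V"
proof
  fix j
  assume "j \<in> nbrs E i"
  then obtain u w where "{j, i} = {u, w}" "u \<in> V" "w \<in> V"
    using E_edges unfolding nbrs_def by blast
  then show "j \<in> V" by (auto simp: doubleton_eq_iff)
qed

lemma finite_nbrs: "finite (nbrs E i)"
  using finite_subset[OF nbrs_subset finite_V] .

lemma weight_pos: "j \<in> nbrs E i \<Longrightarrow> a i j > 0"
  using a_pos unfolding nbrs_def by (simp add: insert_commute)

lemma X_nonempty: "i \<in> V \<Longrightarrow> X i \<noteq> {}"
  using Inter_X_ne by blast

definition coupling :: "(nat \<Rightarrow> real^'m) \<Rightarrow> nat \<Rightarrow> real^'m" where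
  "coupling x i = (x i - closest_point (X i) (x i)) + (\<Sum>j\<in>nbrs E i. a i j *\<^sub>R (x i - x j))"

lemma closed_loop:
  "i \<in> V \<Longrightarrow> t \<ge> 0 \<Longrightarrow> M i (q i t) *v ddq i t
     = - k *\<^sub>R dq i t - C i (q i t) (dq i t) *v dq i t - coupling (\<lambda>j. q j t) i"
  using dynamics unfolding coupling_def by (simp add: algebra_simps)

lemma aggregation_inequality:
  assumes x0: "x0 \<in> (\<Inter>i\<in>V. X i)"
  shows "(\<Sum>i\<in>V. (norm (x i - closest_point (X i) (x i)))\<^sup>2)
      + (\<Sum>i\<in>V. \<Sum>j\<in>nbrs E i. a i j * (norm (x i - x j))\<^sup>2) / 2
      \<le> (\<Sum>i\<in>V. coupling x i \<bullet> (x i - x0))"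
proof -
  have "(norm (x i - closest_point (X i) (x i)))\<^sup>2
      \<le> (x i - closest_point (X i) (x i)) \<bullet> (x i - x0)" if "i \<in> V" for i
  proof -
    let ?p = "closest_point (X i) (x i)"
    have "(x i - ?p) \<bullet> (x0 - ?p) \<le> 0"
      using closest_point_dot[OF X_convex X_closed] that x0 by blast
    moreover have "(x i - ?p) \<bullet> (x i - x0) = (x i - ?p) \<bullet> (x i - ?p) - (x i - ?p) \<bullet> (x0 - ?p)"
      by (simp add: inner_diff_right)
    ultimately show ?thesis
      by (simp add: dot_square_norm)
  qed
  then have "(\<Sum>i\<in>V. (norm (x i - closest_point (X i) (x i)))\<^sup>2)
      \<le> (\<Sum>i\<in>V. (x i - closest_point (X i) (x i)) \<bullet> (x i - x0))"
    by (rule sum_mono)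
  moreover have "(\<Sum>i\<in>V. \<Sum>j\<in>nbrs E i. a i j * ((x i - x j) \<bullet> (x i - x0)))
      = (\<Sum>i\<in>V. \<Sum>j\<in>nbrs E i. a i j * (norm (x i - x j))\<^sup>2) / 2"
    using sum_nbrs_symmetrize[OF finite_V nbrs_subset a_sym, where x=x and z="\<lambda>i. x i - x0"]
    by (simp add: power2_norm_eq_inner)
  moreover have "(\<Sum>i\<in>V. coupling x i \<bullet> (x i - x0))
      = (\<Sum>i\<in>V. (x i - closest_point (X i) (x i)) \<bullet> (x i - x0))
      + (\<Sum>i\<in>V. \<Sum>j\<in>nbrs E i. a i j * ((x i - x j) \<bullet> (x i - x0)))"
    unfolding coupling_def by (simp add: inner_add_left inner_sum_left sum.distrib)
  ultimately show ?thesis by linarith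
qed

lemma coupling_increment_le:
  assumes i: "i \<in> V" and close: "\<And>j. j \<in> V \<Longrightarrow> norm (x j - y j) \<le> \<eta>"
  shows "norm (coupling x i - coupling y i) \<le> 2 * (1 + (\<Sum>j\<in>nbrs E i. a i j)) * \<eta>"
proof -
  let ?P = "closest_point (X i)"
  have "norm (?P (x i) - ?P (y i)) \<le> norm (x i - y i)"
    using closest_point_lipschitz[OF X_convex[OF i] X_closed[OF i] X_nonempty[OF i]]
    by (simp add: dist_norm)
  then have own: "norm ((x i - y i) - (?P (x i) - ?P (y i))) \<le> 2 * \<eta>"
    using close[OF i] norm_triangle_ineq4[of "x i - y i" "?P (x i) - ?P (y i)"] by linarith
  have neighbours: "norm (\<Sum>j\<in>nbrs E i. a i j *\<^sub>R ((x i - y i) - (x j - y j)))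
      \<le> (\<Sum>j\<in>nbrs E i. a i j * (2 * \<eta>))"
  proof (rule order_trans[OF norm_sum sum_mono])
    fix j
    assume j: "j \<in> nbrs E i"
    have "norm ((x i - y i) - (x j - y j)) \<le> 2 * \<eta>"
      using close[OF i] close[of j] j nbrs_subset norm_triangle_ineq4[of "x i - y i" "x j - y j"]
      by fastforce
    then show "norm (a i j *\<^sub>R ((x i - y i) - (x j - y j))) \<le> a i j * (2 * \<eta>)"
      using weight_pos[OF j] by (simp add: mult_left_mono)
  qed
  have "(\<Sum>j\<in>nbrs E i. a i j *\<^sub>R ((x i - y i) - (x j - y j)))
      = (\<Sum>j\<in>nbrs E i. a i j *\<^sub>R (x i - x j)) - (\<Sum>j\<in>nbrs E i. a i j *\<^sub>R (y i - y j))"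
    by (simp add: sum_subtractf[symmetric] algebra_simps)
  then have difference: "coupling x i - coupling y i
      = ((x i - y i) - (?P (x i) - ?P (y i))) + (\<Sum>j\<in>nbrs E i. a i j *\<^sub>R ((x i - y i) - (x j - y j)))"
    unfolding coupling_def by (simp add: algebra_simps)
  have "norm (coupling x i - coupling y i)
      \<le> norm ((x i - y i) - (?P (x i) - ?P (y i)))
        + norm (\<Sum>j\<in>nbrs E i. a i j *\<^sub>R ((x i - y i) - (x j - y j)))"
    unfolding difference by (rule norm_triangle_ineq)
  then show ?thesis
    using own neighbours
    by (simp add: sum_distrib_left[symmetric] sum_distrib_right[symmetric] algebra_simps)
qed

lemma position_has_derivative:
  assumes "i \<in> V" "t > 0"
  shows "(q i has_vector_derivative dq i t) (at t)"
proof -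
  have "at t within {0..} = at t" using assms(2) by (intro at_within_interior) simp
  then show ?thesis using q_deriv[OF assms(1), of t] assms(2) by simp
qed

lemma velocity_has_derivative:
  assumes "i \<in> V" "t > 0"
  shows "(dq i has_vector_derivative ddq i t) (at t)"
proof -
  have "at t within {0..} = at t" using assms(2) by (intro at_within_interior) simp
  then show ?thesis using dq_deriv[OF assms(1), of t] assms(2) by simp
qed

lemma kinetic_energy_has_derivative:
  assumes i: "i \<in> V" and t: "t > 0"
  shows "((\<lambda>s. dq i s \<bullet> (M i (q i s) *v dq i s) / 2) has_real_derivative
           - k * (norm (dq i t))\<^sup>2 - dq i t \<bullet> coupling (\<lambda>j. q j t) i) (at t)"
proof -
  let ?v = "dq i t" and ?A = "M i (q i t)" and ?A' = "M' i (q i t) (dq i t)"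
    and ?C = "C i (q i t) (dq i t)"
  have inertia: "((\<lambda>s. M i (q i s)) has_vector_derivative ?A') (at t)"
    by (rule has_vector_derivative_compose_at[OF position_has_derivative[OF i t] M_deriv[OF i]])
  have "((\<lambda>s. M i (q i s) *v dq i s) has_vector_derivative ?A *v ddq i t + ?A' *v ?v) (at t)"
    using bounded_bilinear.has_vector_derivative[OF bounded_bilinear_matrix_vector_mult inertia
        velocity_has_derivative[OF i t]] by simp
  then have derivative: "((\<lambda>s. dq i s \<bullet> (M i (q i s) *v dq i s)) has_real_derivative
      ?v \<bullet> (?A *v ddq i t + ?A' *v ?v) + ddq i t \<bullet> (?A *v ?v)) (at t)"
    using bounded_bilinear.has_vector_derivative[OF bounded_bilinear_inner
        velocity_has_derivative[OF i t]]
    by (simp add: has_real_derivative_iff_has_vector_derivative)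
  have "ddq i t \<bullet> (?A *v ?v) = ?v \<bullet> (?A *v ddq i t)"
    by (rule symmetric_matrix_inner_commute[OF M_sym[OF i]])
  \<comment> \<open>Skew-symmetry of \<open>M' - 2 C\<close>: the Coriolis forces do no work.\<close>
  moreover have "?v \<bullet> (?A' *v ?v) = 2 * (?v \<bullet> (?C *v ?v))"
    using skew_symmetric_quadratic_form[OF skew[OF i, of "q i t" "dq i t"], of ?v]
    by (simp add: matrix_vector_mult_diff_rdistrib inner_diff_right flip: scaleR_matrix_vector_assoc)
  ultimately have "(?v \<bullet> (?A *v ddq i t + ?A' *v ?v) + ddq i t \<bullet> (?A *v ?v)) / 2
      = ?v \<bullet> (?A *v ddq i t + ?C *v ?v)"
    by (simp add: inner_add_right)
  also have "?A *v ddq i t + ?C *v ?v = - k *\<^sub>R ?v - coupling (\<lambda>j. q j t) i"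
    using closed_loop[OF i] t by simp
  also have "?v \<bullet> (- k *\<^sub>R ?v - coupling (\<lambda>j. q j t) i)
      = - k * (norm ?v)\<^sup>2 - ?v \<bullet> coupling (\<lambda>j. q j t) i"
    by (simp add: inner_diff_right power2_norm_eq_inner)
  finally have rate: "(?v \<bullet> (?A *v ddq i t + ?A' *v ?v) + ddq i t \<bullet> (?A *v ?v)) / 2
      = - k * (norm ?v)\<^sup>2 - ?v \<bullet> coupling (\<lambda>j. q j t) i" .
  show ?thesis
    using DERIV_cdivide[OF derivative, of 2] by (simp only: rate)
qed

text \<open>Every undirected edge occurs twice in the double sum, hence the weight \<open>1/4\<close>.\<close>

definition lyapunov :: "real \<Rightarrow> real" where
  "lyapunov t = (\<Sum>i\<in>V. dq i t \<bullet> (M i (q i t) *v dq i t) / 2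
        + (norm (q i t - closest_point (X i) (q i t)))\<^sup>2 / 2)
      + (\<Sum>i\<in>V. \<Sum>j\<in>nbrs E i. a i j * (norm (q i t - q j t))\<^sup>2) / 4"

lemma lyapunov_has_derivative:
  assumes t: "t > 0"
  shows "(lyapunov has_real_derivative - k * (\<Sum>i\<in>V. (norm (dq i t))\<^sup>2)) (at t)"
proof -
  define flow where "flow i = (\<Sum>j\<in>nbrs E i. a i j * ((q i t - q j t) \<bullet> dq i t))" for i
  have agent: "((\<lambda>s. dq i s \<bullet> (M i (q i s) *v dq i s) / 2
        + (norm (q i s - closest_point (X i) (q i s)))\<^sup>2 / 2)
      has_real_derivative - k * (norm (dq i t))\<^sup>2 - flow i) (at t)" if i: "i \<in> V" for i
  proof -
    let ?d = "q i t - closest_point (X i) (q i t)"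
    have "((\<lambda>s. (norm (q i s - closest_point (X i) (q i s)))\<^sup>2) has_real_derivative 2 * (?d \<bullet> dq i t)) (at t)"
      using has_vector_derivative_compose_at[OF position_has_derivative[OF i t]
          has_derivative_sqdist_closest_point[OF X_closed[OF i] X_convex[OF i] X_nonempty[OF i]]]
      by (simp add: has_real_derivative_iff_has_vector_derivative)
    moreover have "dq i t \<bullet> coupling (\<lambda>j. q j t) i = ?d \<bullet> dq i t + flow i"
      unfolding coupling_def flow_def by (simp add: inner_add_right inner_sum_right inner_commute)
    ultimately show ?thesis
      using DERIV_add[OF kinetic_energy_has_derivative[OF i t] DERIV_cdivide[where c=2]] by fastforce
  qed
  have "((\<lambda>s. (\<Sum>i\<in>V. \<Sum>j\<in>nbrs E i. a i j * (norm (q i s - q j s))\<^sup>2) / 4) has_real_derivative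
      (\<Sum>i\<in>V. \<Sum>j\<in>nbrs E i. a i j * (2 * ((q i t - q j t) \<bullet> (dq i t - dq j t)))) / 4) (at t)"
    using nbrs_subset t
    by (intro DERIV_cdivide DERIV_sum DERIV_cmult has_real_derivative_norm_power2
        has_vector_derivative_diff position_has_derivative) auto
  moreover have "(\<Sum>i\<in>V. \<Sum>j\<in>nbrs E i. a i j * (2 * ((q i t - q j t) \<bullet> (dq i t - dq j t)))) / 4
      = (\<Sum>i\<in>V. flow i)"
    unfolding flow_def
    using sum_nbrs_symmetrize[OF finite_V nbrs_subset a_sym, where x="\<lambda>i. q i t" and z="\<lambda>i. dq i t"]
    by (simp add: sum_distrib_left[symmetric] mult.left_commute[of _ 2])
  ultimately have "(lyapunov has_real_derivative
      (\<Sum>i\<in>V. - k * (norm (dq i t))\<^sup>2 - flow i) + (\<Sum>i\<in>V. flow i)) (at t)"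
    unfolding lyapunov_def[abs_def] using agent by (intro DERIV_add DERIV_sum) auto
  then show ?thesis
    by (simp add: sum_subtractf sum_distrib_left)
qed

lemma inertia_nonneg: "i \<in> V \<Longrightarrow> 0 \<le> v \<bullet> (M i x *v v)"
  using M_pd[of i v x] by (cases "v = 0") auto

lemma agent_energy_le_lyapunov:
  assumes "i \<in> V"
  shows "dq i t \<bullet> (M i (q i t) *v dq i t) / 2
      + (norm (q i t - closest_point (X i) (q i t)))\<^sup>2 / 2 \<le> lyapunov t"
proof -
  have "dq i t \<bullet> (M i (q i t) *v dq i t) / 2 + (norm (q i t - closest_point (X i) (q i t)))\<^sup>2 / 2
      \<le> (\<Sum>i\<in>V. dq i t \<bullet> (M i (q i t) *v dq i t) / 2
        + (norm (q i t - closest_point (X i) (q i t)))\<^sup>2 / 2)"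
    using assms finite_V inertia_nonneg by (intro member_le_sum) auto
  moreover have "0 \<le> (\<Sum>i\<in>V. \<Sum>j\<in>nbrs E i. a i j * (norm (q i t - q j t))\<^sup>2)"
    using weight_pos by (intro sum_nonneg) (simp add: less_imp_le)
  ultimately show ?thesis
    unfolding lyapunov_def by linarith
qed

lemma edge_energy_le_lyapunov:
  assumes "i \<in> V" "j \<in> nbrs E i"
  shows "a i j * (norm (q i t - q j t))\<^sup>2 / 4 \<le> lyapunov t"
proof -
  have "a i j * (norm (q i t - q j t))\<^sup>2 \<le> (\<Sum>j\<in>nbrs E i. a i j * (norm (q i t - q j t))\<^sup>2)"
    using assms(2) finite_nbrs weight_pos by (intro member_le_sum) (auto simp: less_imp_le)
  also have "\<dots> \<le> (\<Sum>i\<in>V. \<Sum>j\<in>nbrs E i. a i j * (norm (q i t - q j t))\<^sup>2)"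
    using assms(1) finite_V weight_pos by (intro member_le_sum sum_nonneg) (auto simp: less_imp_le)
  moreover have "0 \<le> (\<Sum>i\<in>V. dq i t \<bullet> (M i (q i t) *v dq i t) / 2
        + (norm (q i t - closest_point (X i) (q i t)))\<^sup>2 / 2)"
    using inertia_nonneg by (intro sum_nonneg) simp
  ultimately show ?thesis
    unfolding lyapunov_def by linarith
qed

lemma lyapunov_nonneg: "0 \<le> lyapunov t"
  unfolding lyapunov_def using inertia_nonneg weight_pos
  by (intro add_nonneg_nonneg sum_nonneg divide_nonneg_nonneg mult_nonneg_nonneg) (auto simp: less_imp_le)

lemma lyapunov_antimono:
  assumes "0 < s" "s \<le> u"
  shows "lyapunov u \<le> lyapunov s"
proof (rule DERIV_nonpos_imp_nonincreasing[OF assms(2)])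
  fix t
  assume "s \<le> t" "t \<le> u"
  moreover have "0 \<le> k * (\<Sum>i\<in>V. (norm (dq i t))\<^sup>2)"
    using k_pos by (simp add: sum_nonneg)
  ultimately show "\<exists>y. (lyapunov has_real_derivative y) (at t) \<and> y \<le> 0"
    using lyapunov_has_derivative[of t] assms(1) by auto
qed

lemma constraint_distance_le:
  assumes "i \<in> V" "t \<ge> 1"
  shows "norm (q i t - closest_point (X i) (q i t)) \<le> sqrt (2 * lyapunov 1)"
proof (rule real_le_rsqrt)
  show "(norm (q i t - closest_point (X i) (q i t)))\<^sup>2 \<le> 2 * lyapunov 1"
    using agent_energy_le_lyapunov[OF assms(1), of t] inertia_nonneg[OF assms(1), of "dq i t" "q i t"]
      lyapunov_antimono[of 1 t] assms(2) by linarith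
qed

lemma edge_difference_le:
  assumes "i \<in> V" "j \<in> nbrs E i" "t \<ge> 1"
  shows "norm (q i t - q j t) \<le> sqrt (4 * lyapunov 1 / a i j)"
proof (rule real_le_rsqrt)
  have "a i j * (norm (q i t - q j t))\<^sup>2 \<le> 4 * lyapunov 1"
    using edge_energy_le_lyapunov[OF assms(1,2), of t] lyapunov_antimono[of 1 t] assms(3) by simp
  then show "(norm (q i t - q j t))\<^sup>2 \<le> 4 * lyapunov 1 / a i j"
    using weight_pos[OF assms(2)] by (simp add: field_simps)
qed

lemma edge_in_nbrs:
  assumes "{i, j} \<in> E"
  shows "i \<in> V" "j \<in> nbrs E i"
  using assms nbrs_subset[of j] unfolding nbrs_def by (auto simp: insert_commute)

lemma relative_position_bounded:
  assumes "i \<in> V" "j \<in> V"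
  shows "\<exists>R. \<forall>t\<ge>1. norm (q i t - q j t) \<le> R"
proof (rule rtranclp_edge_differences[where P="\<lambda>u. \<exists>R. \<forall>t\<ge>1. norm (u t) \<le> R"])
  show "(\<lambda>x y. {x, y} \<in> E)\<^sup>*\<^sup>* i j"
    using connected assms unfolding graph_connected_def by blast
  show "\<exists>R. \<forall>t\<ge>1. norm (q x t - q y t) \<le> R" if "{x, y} \<in> E" for x y
    using edge_difference_le[OF edge_in_nbrs[OF that]] by blast
  show "\<exists>R. \<forall>t\<ge>1. norm (u t + v t) \<le> R"
    if "\<exists>R. \<forall>t\<ge>1. norm (u t) \<le> R" "\<exists>R. \<forall>t\<ge>1. norm (v t) \<le> R" for u v :: "real \<Rightarrow> real^'m"
    using that by (meson add_mono norm_triangle_le)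
qed (auto intro: exI[of _ 0])

lemma position_bounded:
  assumes i: "i \<in> V"
  shows "\<exists>R. \<forall>t\<ge>1. norm (q i t) \<le> R"
proof -
  have "\<exists>D. \<forall>j\<in>V. \<forall>t\<ge>1. infdist (q i t) (X j) \<le> D"
  proof (rule uniform_bound_finite[OF finite_V])
    fix j
    assume j: "j \<in> V"
    obtain R where R: "\<And>t. t \<ge> 1 \<Longrightarrow> norm (q i t - q j t) \<le> R"
      using relative_position_bounded[OF i j] by blast
    have "infdist (q i t) (X j) \<le> sqrt (2 * lyapunov 1) + R" if "t \<ge> 1" for t
    proof -
      have "infdist (q i t) (X j) \<le> infdist (q j t) (X j) + dist (q i t) (q j t)"
        by (rule infdist_triangle)
      also have "infdist (q j t) (X j) = norm (q j t - closest_point (X j) (q j t))"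
        using infdist_eq_dist_closest_point[OF X_closed[OF j] X_nonempty[OF j]]
        by (simp add: dist_norm)
      finally show ?thesis
        using constraint_distance_le[OF j that] R[OF that] by (simp add: dist_norm)
    qed
    then show "\<exists>D. \<forall>t\<ge>1. infdist (q i t) (X j) \<le> D" by blast
  qed
  then obtain D where D: "\<forall>j\<in>V. \<forall>t\<ge>1. infdist (q i t) (X j) \<le> D" ..
  obtain R where "\<forall>x\<in>{x. \<forall>j\<in>V. infdist x (X j) \<le> D}. norm x \<le> R"
    using bounded_infdist_sublevel_Inter[OF finite_V X_closed X_convex Inter_X_ne Inter_X_bounded]
    unfolding bounded_iff ..
  with D have "norm (q i t) \<le> R" if "t \<ge> 1" for t
    using that by blast
  then show ?thesis by blast
qed

lemma inertia_continuous: "i \<in> V \<Longrightarrow> continuous_on S (M i)"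
  using has_derivative_continuous[OF M_deriv] by (auto intro: continuous_at_imp_continuous_on)

lemma coriolis_bound:
  assumes "i \<in> V"
  shows "norm (C i x v *v v) \<le> \<bar>k_C\<bar> * (norm v)\<^sup>2"
proof -
  have "norm (C i x v *v v) \<le> mnorm (C i x v) * norm v"
    unfolding mnorm_def by (rule onorm[OF matrix_vector_mul_bounded_linear])
  also have "\<dots> \<le> \<bar>k_C\<bar> * norm v * norm v"
    using C_bound[OF assms, of x v] mult_right_mono[OF abs_ge_self[of k_C] norm_ge_zero[of v]]
    by (intro mult_right_mono) auto
  finally show ?thesis
    by (simp add: power2_eq_square mult.assoc)
qed

lemma inertia_uniformly_positive:
  assumes i: "i \<in> V"
  obtains \<mu> where "\<mu> > 0" "\<And>t v. t \<ge> 1 \<Longrightarrow> \<mu> * (norm v)\<^sup>2 \<le> v \<bullet> (M i (q i t) *v v)"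
proof -
  obtain R where R: "\<And>t. t \<ge> 1 \<Longrightarrow> norm (q i t) \<le> R"
    using position_bounded[OF i] by blast
  obtain \<mu> where "\<mu> > 0" "\<And>x v. x \<in> cball 0 R \<Longrightarrow> \<mu> * (norm v)\<^sup>2 \<le> v \<bullet> (M i x *v v)"
    using uniformly_positive_definite_on_compact[OF compact_cball inertia_continuous[OF i] M_pd[OF i]]
    by blast
  with R show ?thesis using that by auto
qed

lemma inertia_operator_bounded:
  assumes i: "i \<in> V"
  shows "\<exists>B. \<forall>t\<ge>1. \<forall>v. norm (M i (q i t) *v v) \<le> B * norm v"
proof -
  obtain R where R: "\<And>t. t \<ge> 1 \<Longrightarrow> norm (q i t) \<le> R"
    using position_bounded[OF i] by blast
  have "bounded (M i ` cball 0 R)"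
    by (intro compact_imp_bounded compact_continuous_image inertia_continuous[OF i] compact_cball)
  then obtain N where N: "\<And>x. x \<in> cball 0 R \<Longrightarrow> norm (M i x) \<le> N"
    unfolding bounded_iff by blast
  obtain K where K: "K > 0" "\<And>(A::real^'m^'m) v. norm (A *v v) \<le> norm A * norm v * K"
    using bounded_bilinear.pos_bounded[OF bounded_bilinear_matrix_vector_mult] by blast
  have "norm (M i (q i t) *v v) \<le> N * K * norm v" if "t \<ge> 1" for t v
    using order_trans[OF K(2) mult_right_mono[OF mult_right_mono[OF N]]] R[OF that] K(1)
    by (simp add: ac_simps)
  then show ?thesis by blast
qed

lemma velocity_bounded:
  assumes i: "i \<in> V"
  shows "\<exists>D. \<forall>t\<ge>1. norm (dq i t) \<le> D"
proof -
  obtain \<mu> where \<mu>: "\<mu> > 0" "\<And>t v. t \<ge> 1 \<Longrightarrow> \<mu> * (norm v)\<^sup>2 \<le> v \<bullet> (M i (q i t) *v v)"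
    using inertia_uniformly_positive[OF i] by blast
  have "norm (dq i t) \<le> sqrt (2 * lyapunov 1 / \<mu>)" if t: "t \<ge> 1" for t
  proof (rule real_le_rsqrt)
    have "0 \<le> (norm (q i t - closest_point (X i) (q i t)))\<^sup>2 / 2"
      by simp
    then have "dq i t \<bullet> (M i (q i t) *v dq i t) \<le> 2 * lyapunov 1"
      using agent_energy_le_lyapunov[OF i, of t] lyapunov_antimono[of 1 t] t by linarith
    then show "(norm (dq i t))\<^sup>2 \<le> 2 * lyapunov 1 / \<mu>"
      using \<mu>(2)[OF t, of "dq i t"] \<mu>(1) by (simp add: field_simps)
  qed
  then show ?thesis by blast
qed

lemma coupling_bounded:
  assumes i: "i \<in> V"
  shows "\<exists>G. \<forall>t\<ge>1. norm (coupling (\<lambda>j. q j t) i) \<le> G"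
proof -
  have "norm (coupling (\<lambda>j. q j t) i)
      \<le> sqrt (2 * lyapunov 1) + (\<Sum>j\<in>nbrs E i. a i j * sqrt (4 * lyapunov 1 / a i j))"
    if t: "t \<ge> 1" for t
  proof -
    have "norm (\<Sum>j\<in>nbrs E i. a i j *\<^sub>R (q i t - q j t))
        \<le> (\<Sum>j\<in>nbrs E i. a i j * sqrt (4 * lyapunov 1 / a i j))"
      using edge_difference_le[OF i _ t] weight_pos
      by (intro order_trans[OF norm_sum sum_mono]) (simp add: mult_left_mono less_imp_le)
    then show ?thesis
      unfolding coupling_def
      using constraint_distance_le[OF i t] norm_triangle_le[OF add_mono] by blast
  qed
  then show ?thesis by blast
qed

lemma coupling_residual_le:
  assumes i: "i \<in> V" and "s \<ge> 0"
  shows "norm (M i (q i t) *v ddq i s + coupling (\<lambda>j. q j t) i)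
    \<le> norm ((M i (q i t) - M i (q i s)) *v ddq i s) + k * norm (dq i s)
      + \<bar>k_C\<bar> * (norm (dq i s))\<^sup>2 + norm (coupling (\<lambda>j. q j s) i - coupling (\<lambda>j. q j t) i)"
proof -
  let ?D = "(M i (q i t) - M i (q i s)) *v ddq i s" and ?c = "C i (q i s) (dq i s) *v dq i s"
    and ?g = "coupling (\<lambda>j. q j s) i - coupling (\<lambda>j. q j t) i"
  have residual: "M i (q i t) *v ddq i s + coupling (\<lambda>j. q j t) i = ?D - k *\<^sub>R dq i s - ?c - ?g"
    using closed_loop[OF assms] by (simp add: matrix_vector_mult_diff_rdistrib algebra_simps)
  have "norm (?D - k *\<^sub>R dq i s - ?c - ?g) \<le> norm ?D + norm (k *\<^sub>R dq i s) + norm ?c + norm ?g"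
    using norm_triangle_ineq4[of "?D - k *\<^sub>R dq i s - ?c" ?g] norm_triangle_ineq4[of "?D - k *\<^sub>R dq i s" ?c]
      norm_triangle_ineq4[of ?D "k *\<^sub>R dq i s"] by linarith
  moreover have "norm ?c \<le> \<bar>k_C\<bar> * (norm (dq i s))\<^sup>2"
    by (rule coriolis_bound[OF i])
  moreover have "norm (k *\<^sub>R dq i s) = k * norm (dq i s)"
    using k_pos by simp
  ultimately show ?thesis
    unfolding residual by linarith
qed

lemma acceleration_bounded:
  assumes i: "i \<in> V"
  shows "\<exists>A. \<forall>t\<ge>1. norm (ddq i t) \<le> A"
proof -
  obtain \<mu> where \<mu>: "\<mu> > 0" "\<And>t v. t \<ge> 1 \<Longrightarrow> \<mu> * (norm v)\<^sup>2 \<le> v \<bullet> (M i (q i t) *v v)"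
    using inertia_uniformly_positive[OF i] by blast
  obtain D where D: "\<And>t. t \<ge> 1 \<Longrightarrow> norm (dq i t) \<le> D"
    using velocity_bounded[OF i] by blast
  obtain G where G: "\<And>t. t \<ge> 1 \<Longrightarrow> norm (coupling (\<lambda>j. q j t) i) \<le> G"
    using coupling_bounded[OF i] by blast
  define F where "F = k * D + \<bar>k_C\<bar> * D\<^sup>2 + G"
  have "norm (ddq i t) \<le> F / \<mu>" if t: "t \<ge> 1" for t
  proof -
    let ?y = "ddq i t"
    have "norm (M i (q i t) *v ?y + coupling (\<lambda>j. q j t) i)
        \<le> k * norm (dq i t) + \<bar>k_C\<bar> * (norm (dq i t))\<^sup>2"
      using coupling_residual_le[OF i, of t t] t by simp
    also have "\<dots> \<le> k * D + \<bar>k_C\<bar> * D\<^sup>2"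
      using D[OF t] k_pos by (intro add_mono mult_left_mono power_mono) auto
    finally have "norm (M i (q i t) *v ?y) \<le> F"
      unfolding F_def using G[OF t] norm_triangle_ineq4[of "M i (q i t) *v ?y + coupling (\<lambda>j. q j t) i"
          "coupling (\<lambda>j. q j t) i"] by simp
    have "\<mu> * (norm ?y)\<^sup>2 \<le> norm ?y * norm (M i (q i t) *v ?y)"
      using \<mu>(2)[OF t, of ?y] norm_cauchy_schwarz[of ?y "M i (q i t) *v ?y"] by linarith
    also have "\<dots> \<le> norm ?y * F"
      using \<open>norm (M i (q i t) *v ?y) \<le> F\<close> by (simp add: mult_left_mono)
    finally have "\<mu> * norm ?y \<le> F" if "?y \<noteq> 0"
      using that by (simp add: power2_eq_square)
    moreover have "0 \<le> F"
      using \<open>norm (M i (q i t) *v ?y) \<le> F\<close> norm_ge_zero order_trans by blast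
    ultimately show ?thesis
      using \<mu>(1) by (cases "?y = 0") (auto simp: field_simps)
  qed
  then show ?thesis by blast
qed

lemma velocity_tendsto_zero:
  assumes i: "i \<in> V"
  shows "(dq i \<longlongrightarrow> 0) at_top"
proof -
  obtain A where A: "\<And>t. t \<ge> 1 \<Longrightarrow> norm (ddq i t) \<le> A"
    using acceleration_bounded[OF i] by blast
  show ?thesis
  proof (rule tendsto_zero_of_dissipation[where W=lyapunov and T=1 and c=k and L=0])
    fix t :: real
    assume t: "t \<ge> 1"
    then show "(lyapunov has_real_derivative - k * (\<Sum>i\<in>V. (norm (dq i t))\<^sup>2)) (at t)"
      by (intro lyapunov_has_derivative) simp
    have "(norm (dq i t))\<^sup>2 \<le> (\<Sum>i\<in>V. (norm (dq i t))\<^sup>2)"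
      using i finite_V by (intro member_le_sum) auto
    then show "- k * (\<Sum>i\<in>V. (norm (dq i t))\<^sup>2) \<le> - k * (norm (dq i t))\<^sup>2"
      using k_pos by simp
    show "(dq i has_vector_derivative ddq i t) (at t)"
      using velocity_has_derivative[OF i] t by simp
    show "norm (ddq i t) \<le> A" by (rule A[OF t])
  qed (use k_pos lyapunov_nonneg in auto)
qed

lemma positions_increment_small:
  assumes "\<eta> > 0"
  shows "eventually (\<lambda>t. \<forall>j\<in>V. \<forall>s\<in>{t..t+1}. norm (q j s - q j t) \<le> \<eta>) at_top"
proof (rule eventually_ball_finite[OF finite_V], intro ballI)
  fix j
  assume j: "j \<in> V"
  show "eventually (\<lambda>t. \<forall>s\<in>{t..t+1}. norm (q j s - q j t) \<le> \<eta>) at_top"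
    using position_has_derivative[OF j] velocity_tendsto_zero[OF j] assms
    by (intro eventually_uniform_increment_le[where T=1]) auto
qed

lemma inertia_variation_small:
  assumes i: "i \<in> V" and "\<epsilon> > 0"
  shows "eventually (\<lambda>t. \<forall>s\<in>{t..t+1}. norm ((M i (q i t) - M i (q i s)) *v ddq i s) \<le> \<epsilon>) at_top"
proof -
  obtain R where R: "\<And>t. t \<ge> 1 \<Longrightarrow> norm (q i t) \<le> R"
    using position_bounded[OF i] by blast
  obtain A where A: "\<And>t. t \<ge> 1 \<Longrightarrow> norm (ddq i t) \<le> A"
    using acceleration_bounded[OF i] by blast
  obtain K where K: "K > 0" "\<And>(N::real^'m^'m) v. norm (N *v v) \<le> norm N * norm v * K"
    using bounded_bilinear.pos_bounded[OF bounded_bilinear_matrix_vector_mult] by blast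
  define e where "e = \<epsilon> / (max A 1 * K)"
  have "e > 0" "e * max A 1 * K = \<epsilon>"
    unfolding e_def using \<open>\<epsilon> > 0\<close> K(1) by auto
  have "uniformly_continuous_on (cball 0 R) (M i)"
    by (rule compact_uniformly_continuous[OF inertia_continuous[OF i] compact_cball])
  then obtain \<delta> where \<delta>: "\<delta> > 0"
    "\<And>x x'. x \<in> cball 0 R \<Longrightarrow> x' \<in> cball 0 R \<Longrightarrow> dist x' x < \<delta> \<Longrightarrow> dist (M i x') (M i x) < e"
    unfolding uniformly_continuous_on_def using \<open>e > 0\<close> by metis
  have "eventually (\<lambda>t. \<forall>j\<in>V. \<forall>s\<in>{t..t+1}. norm (q j s - q j t) \<le> \<delta> / 2) at_top"
    using positions_increment_small[of "\<delta> / 2"] \<delta>(1) by simp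
  moreover have "eventually (\<lambda>t::real. t \<ge> 1) at_top"
    by (rule eventually_ge_at_top)
  ultimately show ?thesis
  proof eventually_elim
    case (elim t)
    show ?case
    proof
      fix s
      assume s: "s \<in> {t..t+1}"
      then have "dist (q i t) (q i s) < \<delta>"
        using elim i \<delta>(1) by (fastforce simp: dist_norm norm_minus_commute)
      then have "norm (M i (q i t) - M i (q i s)) \<le> e"
        using \<delta>(2) R elim s by (simp add: dist_norm less_imp_le)
      then have "norm (M i (q i t) - M i (q i s)) * norm (ddq i s) \<le> e * max A 1"
        using A[of s] elim s \<open>e > 0\<close> by (intro mult_mono) auto
      then have "norm (M i (q i t) - M i (q i s)) * norm (ddq i s) * K \<le> \<epsilon>"
        using K(1) \<open>e * max A 1 * K = \<epsilon>\<close> mult_right_mono[of _ _ K] by fastforce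
      then show "norm ((M i (q i t) - M i (q i s)) *v ddq i s) \<le> \<epsilon>"
        using K(2)[of "M i (q i t) - M i (q i s)" "ddq i s"] by linarith
    qed
  qed
qed

lemma velocity_terms_small:
  assumes i: "i \<in> V" and "\<epsilon> > 0"
  shows "eventually (\<lambda>t. \<forall>s\<in>{t..t+1}. k * norm (dq i s) + \<bar>k_C\<bar> * (norm (dq i s))\<^sup>2 \<le> \<epsilon>) at_top"
proof -
  have "((\<lambda>s. k * norm (dq i s) + \<bar>k_C\<bar> * (norm (dq i s))\<^sup>2) \<longlongrightarrow> k * 0 + \<bar>k_C\<bar> * 0\<^sup>2) at_top"
    by (intro tendsto_intros tendsto_norm_zero velocity_tendsto_zero[OF i])
  then have "eventually (\<lambda>s. k * norm (dq i s) + \<bar>k_C\<bar> * (norm (dq i s))\<^sup>2 < \<epsilon>) at_top"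
    using \<open>\<epsilon> > 0\<close> by (intro order_tendstoD(2)) auto
  then show ?thesis
    by (rule eventually_mono[OF eventually_all_ge_at_top]) auto
qed

lemma coupling_variation_small:
  assumes i: "i \<in> V" and "\<epsilon> > 0"
  shows "eventually (\<lambda>t. \<forall>s\<in>{t..t+1}.
      norm (coupling (\<lambda>j. q j s) i - coupling (\<lambda>j. q j t) i) \<le> \<epsilon>) at_top"
proof -
  define c where "c = 2 * (1 + (\<Sum>j\<in>nbrs E i. a i j))"
  have "c > 0"
    unfolding c_def using weight_pos by (simp add: sum_nonneg less_imp_le add_pos_nonneg)
  then have "eventually (\<lambda>t. \<forall>j\<in>V. \<forall>s\<in>{t..t+1}. norm (q j s - q j t) \<le> \<epsilon> / c) at_top"
    using \<open>\<epsilon> > 0\<close> by (intro positions_increment_small) simp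
  then show ?thesis
  proof (rule eventually_mono, intro ballI)
    fix t s
    assume "\<forall>j\<in>V. \<forall>s\<in>{t..t+1}. norm (q j s - q j t) \<le> \<epsilon> / c" and "s \<in> {t..t+1}"
    then have "norm (coupling (\<lambda>j. q j s) i - coupling (\<lambda>j. q j t) i) \<le> c * (\<epsilon> / c)"
      unfolding c_def by (intro coupling_increment_le[OF i]) auto
    then show "norm (coupling (\<lambda>j. q j s) i - coupling (\<lambda>j. q j t) i) \<le> \<epsilon>"
      using \<open>c > 0\<close> by simp
  qed
qed

lemma coupling_tendsto_zero:
  assumes i: "i \<in> V"
  shows "((\<lambda>t. coupling (\<lambda>j. q j t) i) \<longlongrightarrow> 0) at_top"
proof -
  obtain B where B: "\<And>t v. t \<ge> 1 \<Longrightarrow> norm (M i (q i t) *v v) \<le> B * norm v"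
    using inertia_operator_bounded[OF i] by blast
  \<comment> \<open>On \<open>[t, t + 1]\<close> the inertia matrix is nearly frozen at \<open>M (q t)\<close>, so the closed loop
    makes \<open>M (q t) ddq\<close> nearly equal to \<open>- coupling\<close>, while \<open>dq\<close> itself tends to zero.\<close>
  have "eventually (\<lambda>t. \<forall>s\<in>{t..t+1}.
      norm (M i (q i t) *v ddq i s - - coupling (\<lambda>j. q j t) i) \<le> \<epsilon>) at_top" if "\<epsilon> > 0" for \<epsilon>
  proof -
    have third: "\<epsilon> / 3 > 0"
      using that by simp
    show ?thesis
      using inertia_variation_small[OF i third] velocity_terms_small[OF i third]
        coupling_variation_small[OF i third] eventually_ge_at_top[of 0]
    proof eventually_elim
      case (elim t)
      show ?case
      proof
        fix s
        assume "s \<in> {t..t+1}"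
        then show "norm (M i (q i t) *v ddq i s - - coupling (\<lambda>j. q j t) i) \<le> \<epsilon>"
          using elim coupling_residual_le[OF i, of s t] by fastforce
      qed
    qed
  qed
  moreover have "(dq i has_vector_derivative ddq i t) (at t)" if "t \<ge> 1" for t
    using velocity_has_derivative[OF i] that by simp
  ultimately have "((\<lambda>t. - coupling (\<lambda>j. q j t) i) \<longlongrightarrow> 0) at_top"
    using B
    by (intro tendsto_zero_of_approximate_derivative[OF velocity_tendsto_zero[OF i],
          where T=1 and L="\<lambda>t. (*v) (M i (q i t))" and K=B])
      (auto intro: matrix_vector_mul_bounded_linear)
  then show ?thesis
    using tendsto_minus[of _ 0] by fastforce
qed

definition aggregation_error :: "real \<Rightarrow> real" where
  "aggregation_error t = (\<Sum>i\<in>V. (norm (q i t - closest_point (X i) (q i t)))\<^sup>2)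
       + (\<Sum>i\<in>V. \<Sum>j\<in>nbrs E i. a i j * (norm (q i t - q j t))\<^sup>2) / 2"

lemma aggregation_error_nonneg: "0 \<le> aggregation_error t"
proof -
  have "0 \<le> (\<Sum>i\<in>V. \<Sum>j\<in>nbrs E i. a i j * (norm (q i t - q j t))\<^sup>2)"
    using weight_pos by (intro sum_nonneg) (simp add: less_imp_le)
  moreover have "0 \<le> (\<Sum>i\<in>V. (norm (q i t - closest_point (X i) (q i t)))\<^sup>2)"
    by (simp add: sum_nonneg)
  ultimately show ?thesis
    unfolding aggregation_error_def by linarith
qed

lemma constraint_distance_le_aggregation_error:
  assumes "i \<in> V"
  shows "(norm (q i t - closest_point (X i) (q i t)))\<^sup>2 \<le> aggregation_error t"
proof -
  have "(norm (q i t - closest_point (X i) (q i t)))\<^sup>2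
      \<le> (\<Sum>i\<in>V. (norm (q i t - closest_point (X i) (q i t)))\<^sup>2)"
    using assms finite_V by (intro member_le_sum) auto
  moreover have "0 \<le> (\<Sum>i\<in>V. \<Sum>j\<in>nbrs E i. a i j * (norm (q i t - q j t))\<^sup>2)"
    using weight_pos by (intro sum_nonneg) (simp add: less_imp_le)
  ultimately show ?thesis
    unfolding aggregation_error_def by linarith
qed

lemma edge_energy_le_aggregation_error:
  assumes "i \<in> V" "j \<in> nbrs E i"
  shows "a i j * (norm (q i t - q j t))\<^sup>2 \<le> 2 * aggregation_error t"
proof -
  have "a i j * (norm (q i t - q j t))\<^sup>2 \<le> (\<Sum>j\<in>nbrs E i. a i j * (norm (q i t - q j t))\<^sup>2)"
    using assms(2) finite_nbrs weight_pos by (intro member_le_sum) (auto simp: less_imp_le)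
  also have "\<dots> \<le> (\<Sum>i\<in>V. \<Sum>j\<in>nbrs E i. a i j * (norm (q i t - q j t))\<^sup>2)"
    using assms(1) finite_V weight_pos by (intro member_le_sum sum_nonneg) (auto simp: less_imp_le)
  moreover have "0 \<le> (\<Sum>i\<in>V. (norm (q i t - closest_point (X i) (q i t)))\<^sup>2)"
    by (simp add: sum_nonneg)
  moreover have "2 * aggregation_error t = 2 * (\<Sum>i\<in>V. (norm (q i t - closest_point (X i) (q i t)))\<^sup>2)
      + (\<Sum>i\<in>V. \<Sum>j\<in>nbrs E i. a i j * (norm (q i t - q j t))\<^sup>2)"
    unfolding aggregation_error_def by simp
  ultimately show ?thesis
    by linarith
qed

lemma aggregation_error_tendsto_zero: "(aggregation_error \<longlongrightarrow> 0) at_top"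
proof -
  obtain x0 where x0: "x0 \<in> (\<Inter>i\<in>V. X i)"
    using Inter_X_ne by blast
  have "\<exists>R. \<forall>i\<in>V. \<forall>t\<ge>1. norm (q i t) \<le> R"
    using uniform_bound_finite[OF finite_V position_bounded] .
  then obtain R where R: "\<And>i t. i \<in> V \<Longrightarrow> t \<ge> 1 \<Longrightarrow> norm (q i t) \<le> R"
    by blast
  let ?bound = "\<lambda>t. \<Sum>i\<in>V. norm (coupling (\<lambda>j. q j t) i) * (R + norm x0)"
  \<comment> \<open>The coupling forces vanish, while the aggregation inequality bounds the error by
    their work against the bounded displacements from a common point \<open>x0\<close>.\<close>
  have bound_limit: "(?bound \<longlongrightarrow> 0) at_top"
    by (intro tendsto_null_sum tendsto_mult_left_zero tendsto_norm_zero coupling_tendsto_zero)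
  have bound: "eventually (\<lambda>t. aggregation_error t \<le> ?bound t) at_top"
    using eventually_ge_at_top[of 1]
  proof eventually_elim
    case (elim t)
    have "aggregation_error t \<le> (\<Sum>i\<in>V. coupling (\<lambda>j. q j t) i \<bullet> (q i t - x0))"
      unfolding aggregation_error_def by (rule aggregation_inequality[OF x0])
    also have "\<dots> \<le> ?bound t"
    proof (rule sum_mono)
      fix i
      assume "i \<in> V"
      then have "norm (q i t - x0) \<le> R + norm x0"
        using R[of i t] elim norm_triangle_ineq4[of "q i t" x0] by linarith
      then have "norm (coupling (\<lambda>j. q j t) i) * norm (q i t - x0)
          \<le> norm (coupling (\<lambda>j. q j t) i) * (R + norm x0)"
        by (rule mult_left_mono) simp
      then show "coupling (\<lambda>j. q j t) i \<bullet> (q i t - x0) \<le> norm (coupling (\<lambda>j. q j t) i) * (R + norm x0)"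
        using norm_cauchy_schwarz[of "coupling (\<lambda>j. q j t) i" "q i t - x0"] by linarith
    qed
    finally show ?case .
  qed
  show ?thesis
    using aggregation_error_nonneg
    by (intro tendsto_sandwich[OF always_eventually bound tendsto_const bound_limit]) simp
qed

lemma constraint_distance_tendsto_zero:
  "i \<in> V \<Longrightarrow> ((\<lambda>t. q i t - closest_point (X i) (q i t)) \<longlongrightarrow> 0) at_top"
  by (rule tendsto_zero_of_norm_power2_le[OF aggregation_error_tendsto_zero
        constraint_distance_le_aggregation_error])

lemma edge_difference_tendsto_zero:
  assumes "{i, j} \<in> E"
  shows "((\<lambda>t. q i t - q j t) \<longlongrightarrow> 0) at_top"
proof (rule tendsto_zero_of_norm_power2_le)
  show "((\<lambda>t. 2 / a i j * aggregation_error t) \<longlongrightarrow> 0) at_top"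
    by (rule tendsto_mult_right_zero[OF aggregation_error_tendsto_zero])
  show "(norm (q i t - q j t))\<^sup>2 \<le> 2 / a i j * aggregation_error t" for t
    using edge_energy_le_aggregation_error[OF edge_in_nbrs[OF assms], of t]
      weight_pos[OF edge_in_nbrs(2)[OF assms]] by (simp add: field_simps)
qed

lemma consensus:
  assumes "i \<in> V" "j \<in> V"
  shows "((\<lambda>t. q i t - q j t) \<longlongrightarrow> 0) at_top"
proof (rule rtranclp_edge_differences[where P="\<lambda>u. (u \<longlongrightarrow> 0) at_top"])
  show "(\<lambda>x y. {x, y} \<in> E)\<^sup>*\<^sup>* i j"
    using connected assms unfolding graph_connected_def by blast
qed (auto intro: edge_difference_tendsto_zero tendsto_add_zero)

lemma set_aggregation:
  assumes i: "i \<in> V"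
  shows "((\<lambda>t. infdist (q i t) (\<Inter>j\<in>V. X j)) \<longlongrightarrow> 0) at_top"
proof -
  obtain R where "\<And>t. t \<ge> 1 \<Longrightarrow> norm (q i t) \<le> R"
    using position_bounded[OF i] by blast
  then have q_bounded: "eventually (\<lambda>t. norm (q i t) \<le> R) at_top"
    by (auto simp: eventually_at_top_linorder)
  have "((\<lambda>t. infdist (q i t) (X j)) \<longlongrightarrow> 0) at_top" if j: "j \<in> V" for j
  proof (rule tendsto_sandwich[OF always_eventually always_eventually tendsto_const])
    show "\<forall>t. infdist (q i t) (X j) \<le> norm (q i t - q j t) + norm (q j t - closest_point (X j) (q j t))"
      using infdist_triangle[of "q i t" "X j" "q j t" for t]
        infdist_eq_dist_closest_point[OF X_closed[OF j] X_nonempty[OF j]]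
      by (simp add: dist_norm add.commute)
    show "((\<lambda>t. norm (q i t - q j t) + norm (q j t - closest_point (X j) (q j t))) \<longlongrightarrow> 0) at_top"
      using tendsto_add[OF tendsto_norm_zero[OF consensus[OF i j]]
          tendsto_norm_zero[OF constraint_distance_tendsto_zero[OF j]]] by simp
  qed (simp add: infdist_nonneg)
  then show ?thesis
    using X_closed by (intro tendsto_infdist_Inter[OF finite_V _ q_bounded]) auto
qed

end

theorem theorem1:
  fixes n :: nat
    and M :: "nat \<Rightarrow> real^'m \<Rightarrow> real^'m^'m"
    and M' :: "nat \<Rightarrow> real^'m \<Rightarrow> real^'m \<Rightarrow> real^'m^'m"
    and C :: "nat \<Rightarrow> real^'m \<Rightarrow> real^'m \<Rightarrow> real^'m^'m"
    and X :: "nat \<Rightarrow> (real^'m) set"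
    and E :: "nat set set"
    and a :: "nat \<Rightarrow> nat \<Rightarrow> real"
    and k k_C :: real
    and q dq ddq :: "nat \<Rightarrow> real \<Rightarrow> real^'m"
  defines "V \<equiv> {1..n}"
  defines "X0 \<equiv> (\<Inter>i\<in>{1..n}. X i)"
  assumes n_pos: "n \<ge> 1"
    and M_sym: "\<And>i x. i \<in> V \<Longrightarrow> transpose (M i x) = M i x"
    and M_pd: "\<And>i x v. i \<in> V \<Longrightarrow> v \<noteq> 0 \<Longrightarrow> v \<bullet> (M i x *v v) > 0"
    and M_bdd: "\<And>i. i \<in> V \<Longrightarrow> bounded (range (M i))"
    and M_deriv: "\<And>i x. i \<in> V \<Longrightarrow> (M i has_derivative M' i x) (at x)"
    and skew: "\<And>i x v. i \<in> V \<Longrightarrow>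
        transpose (M' i x v - 2 *\<^sub>R C i x v) = - (M' i x v - 2 *\<^sub>R C i x v)"
    and kC_pos: "k_C > 0"
    and C_bound: "\<And>i x v. i \<in> V \<Longrightarrow> mnorm (C i x v) \<le> k_C * norm v"
    and C_bdd: "\<And>i v. i \<in> V \<Longrightarrow> bounded (range (\<lambda>x. C i x v))"
    and X_closed: "\<And>i. i \<in> V \<Longrightarrow> closed (X i)"
    and X_convex: "\<And>i. i \<in> V \<Longrightarrow> convex (X i)"
    and X0_ne: "X0 \<noteq> {}"
    and X0_bdd: "bounded X0"
    and E_edges: "\<And>e. e \<in> E \<Longrightarrow> \<exists>i j. e = {i, j} \<and> i \<in> V \<and> j \<in> V \<and> i \<noteq> j"
    and a_sym: "\<And>i j. {i, j} \<in> E \<Longrightarrow> a i j = a j i"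
    and a_pos: "\<And>i j. {i, j} \<in> E \<Longrightarrow> a i j > 0"
    and k_pos: "k > 0"
    and conn: "graph_connected V E"
    and q_deriv: "\<And>i t. i \<in> V \<Longrightarrow> t \<ge> 0 \<Longrightarrow>
        (q i has_vector_derivative dq i t) (at t within {0..})"
    and dq_deriv: "\<And>i t. i \<in> V \<Longrightarrow> t \<ge> 0 \<Longrightarrow>
        (dq i has_vector_derivative ddq i t) (at t within {0..})"
    and dyn: "\<And>i t. i \<in> V \<Longrightarrow> t \<ge> 0 \<Longrightarrow>
        M i (q i t) *v ddq i t + C i (q i t) (dq i t) *v dq i t =
          - k *\<^sub>R dq i t - (q i t - closest_point (X i) (q i t))
          - (\<Sum>j\<in>nbrs E i. a i j *\<^sub>R (q i t - q j t))"
  shows "(\<forall>i\<in>V. ((\<lambda>t. infdist (q i t) X0) \<longlongrightarrow> 0) at_top)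
       \<and> (\<forall>i\<in>V. \<forall>j\<in>V. ((\<lambda>t. q i t - q j t) \<longlongrightarrow> 0) at_top)
       \<and> (\<forall>i\<in>V. (dq i \<longlongrightarrow> 0) at_top)"
proof -
  have X0_V: "X0 = (\<Inter>i\<in>V. X i)"
    unfolding X0_def V_def ..
  interpret lagrangian_network V M M' C X E a k k_C q dq ddq
  proof
    show "finite V"
      unfolding V_def by simp
    show "(\<Inter>i\<in>V. X i) \<noteq> {}" "bounded (\<Inter>i\<in>V. X i)"
      using X0_ne X0_bdd unfolding X0_V .
    show "\<exists>i j. e = {i, j} \<and> i \<in> V \<and> j \<in> V" if "e \<in> E" for e
      using E_edges[OF that] by blast
  qed (fact M_sym M_pd M_deriv skew C_bound X_closed X_convex a_sym a_pos k_pos conn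
      q_deriv dq_deriv dyn)+
  show ?thesis
    unfolding X0_V
    using set_aggregation consensus velocity_tendsto_zero by auto
qed

end
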